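(* Let $X_1,X_2,\dots$ be independent nonnegative random variables such that $X_2,X_3,\dots$ are i.i.d. with $p:=\mathbb{P}(X_k>0)\in(0,1]$ for $k\ge2$. Let $\mathfrak{X}_2,\mathfrak{X}_3,\dots$ be i.i.d., independent of $(X_k)$, with $\mathbb{P}(\mathfrak{X}_k\in U)=\mathbb{P}(X_k\in U\mid X_k>0)$ for Borel $U$, and set $\mathfrak{S}_k=\mathfrak{X}_2+\dots+\mathfrak{X}_{k+1}$ and $S_n=X_1+\dots+X_n$. For $k\ge1$ let $I_k=\inf\{x\ge0:\mathbb{P}(X_k\le x)>0\}$. Suppose $I_2=0$, and let $L>0$ be such that $\mathbb{P}(X_1+\mathfrak{X}_2\le L)>0$. Define $K^\ast=\sup\{k\ge1:\mathbb{P}(X_1+\mathfrak{S}_k\le L)>0\}$. Then: (1) if $K^\ast=\infty$, then for every $\delta>0$, $\lim_{n\to\infty}\mathbb{P}(X_1>I_1+\delta\mid S_n\le L)=0$; (2) if $K^\ast<\infty$, then for every $\delta>0$, $\lim_{n\to\infty}\mathbb{P}(X_1>I_1+\delta\mid S_n\le L)=\mathbb{P}(X_1>I_1+\delta\mid X_1+\mathfrak{S}_{K^\ast}\le L)$. *)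

theory Defs
  imports "HOL-Probability.Probability" "HOL-Library.Extended_Nat"
begin

definition lower_end :: "'a measure \<Rightarrow> ('a \<Rightarrow> real) \<Rightarrow> real" where
  "lower_end M Z = Inf {x. x \<ge> 0 \<and> measure M {\<omega> \<in> space M. Z \<omega> \<le> x} > 0}"

definition frakS :: "(nat \<Rightarrow> 'a \<Rightarrow> real) \<Rightarrow> nat \<Rightarrow> 'a \<Rightarrow> real" where
  "frakS Y k \<omega> = (\<Sum>j\<in>{2..k+1}. Y j \<omega>)"

definition partS :: "(nat \<Rightarrow> 'a \<Rightarrow> real) \<Rightarrow> nat \<Rightarrow> 'a \<Rightarrow> real" where
  "partS X n \<omega> = (\<Sum>j\<in>{1..n}. X j \<omega>)"

definition Kstar :: "'a measure \<Rightarrow> (nat \<Rightarrow> 'a \<Rightarrow> real) \<Rightarrow> (nat \<Rightarrow> 'a \<Rightarrow> real) \<Rightarrow> real \<Rightarrow> enat" where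
  "Kstar M X Y L = Sup (enat ` {k. k \<ge> 1 \<and>
      measure M {\<omega> \<in> space M. X 1 \<omega> + frakS Y k \<omega> \<le> L} > 0})"

end

theory Submission
  imports Defs
begin

(*
  Split S_n according to which of X_2, ..., X_n are positive. Given that exactly k of them
  are, their sum has the law of frakS_k and is independent of X_1, so the number of positive
  summands is Binomial(n-1, p) and
    P(X_1 in B, S_n <= L) = sum_k Bin(n-1, p){k} * P(X_1 in B, X_1 + frakS_k <= L).
  Numerator and denominator of the conditional probability are two such mixtures.

  If K* is finite, then p < 1 (for p = 1 the conditioned law charges every (0, t] because
  I_2 = 0, which makes K* infinite), the terms with k > K* vanish, and the binomial weight of
  index K* dominates every weight of smaller index as n grows; so the ratio tends to the
  ratio of the K*-th terms.

  If K* is infinite, the law F of the conditioned variable charges every (0, t]. On the event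
  {X_1 > I_1 + delta, X_1 + frakS_k <= L} the k positive summands add up to less than
  a = L - I_1 - delta, so at least half of them are O(1/k) while the others sum to at most a.
  Replacing X_1 by a value <= I_1 + delta/2 and such a small summand by one <= delta/2 keeps the
  total below L, and independence turns this into
    P(X_1 > I_1 + delta, X_1 + frakS_k <= L) <= C F(O(1/k)) P(X_1 + frakS_k <= L).
  Since F(0) = 0 and F is right-continuous, these terms are negligible for large k, and the
  binomial weights make the finitely many remaining ones negligible as well.
*)

section \<open>Independence, integration and distribution functions\<close>

lemma (in prob_space) nn_integral_indep_var:
  assumes ind: "indep_var S U T V" and H: "case_prod H \<in> borel_measurable (S \<Otimes>\<^sub>M T)"
  shows "(\<integral>\<^sup>+\<omega>. H (U \<omega>) (V \<omega>) \<partial>M) = (\<integral>\<^sup>+\<omega>. (\<integral>\<^sup>+v. H (U \<omega>) v \<partial>distr M T V) \<partial>M)"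
proof -
  have rv: "random_variable S U" "random_variable T V"
    using ind by (auto dest: indep_var_rv1 indep_var_rv2)
  interpret SU: prob_space "distr M S U" by (rule prob_space_distr) (rule rv)
  interpret TV: prob_space "distr M T V" by (rule prob_space_distr) (rule rv)
  interpret P: pair_sigma_finite "distr M S U" "distr M T V" ..
  have H': "case_prod H \<in> borel_measurable (distr M S U \<Otimes>\<^sub>M distr M T V)"
    using H by (simp cong: measurable_cong_sets)
  have "(\<integral>\<^sup>+\<omega>. H (U \<omega>) (V \<omega>) \<partial>M) = (\<integral>\<^sup>+z. case_prod H z \<partial>distr M (S \<Otimes>\<^sub>M T) (\<lambda>x. (U x, V x)))"
    using H rv by (subst nn_integral_distr) (auto intro: measurable_Pair)
  also have "\<dots> = (\<integral>\<^sup>+z. case_prod H z \<partial>(distr M S U \<Otimes>\<^sub>M distr M T V))"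
    using ind indep_var_distribution_eq by metis
  also have "\<dots> = (\<integral>\<^sup>+u. (\<integral>\<^sup>+v. H u v \<partial>distr M T V) \<partial>distr M S U)"
    using TV.nn_integral_fst[OF H'] by simp
  also have "\<dots> = (\<integral>\<^sup>+\<omega>. (\<integral>\<^sup>+v. H (U \<omega>) v \<partial>distr M T V) \<partial>M)"
    using TV.borel_measurable_nn_integral[OF H'] rv
    by (subst nn_integral_distr) (auto cong: measurable_cong_sets)
  finally show ?thesis .
qed

lemma (in prob_space) nn_integral_indep_vars_component:
  assumes ind: "indep_vars (\<lambda>_. borel) Z I" and A: "A \<subseteq> I" "i \<in> I" "i \<notin> A"
    and H: "case_prod H \<in> borel_measurable (PiM A (\<lambda>_. borel) \<Otimes>\<^sub>M borel)"
  shows "(\<integral>\<^sup>+\<omega>. H (restrict (\<lambda>j. Z j \<omega>) A) (Z i \<omega>) \<partial>M)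
       = (\<integral>\<^sup>+\<omega>. (\<integral>\<^sup>+v. H (restrict (\<lambda>j. Z j \<omega>) A) v \<partial>distr M borel (Z i)) \<partial>M)"
proof -
  let ?ZA = "\<lambda>\<omega>. restrict (\<lambda>j. Z j \<omega>) A" and ?Zi = "\<lambda>\<omega>. restrict (\<lambda>j. Z j \<omega>) {i}"
  have I: "indep_var (PiM A (\<lambda>_. borel)) ?ZA (PiM {i} (\<lambda>_. borel)) ?Zi"
    using A by (intro indep_var_restrict[OF ind]) auto
  have rvi: "random_variable borel (Z i)" using ind A by (auto simp: indep_vars_def)
  have rvA: "random_variable (PiM A (\<lambda>_. borel)) ?ZA" using I by (rule indep_var_rv1)
  have rv1: "random_variable (PiM {i} (\<lambda>_. borel)) ?Zi" using I by (rule indep_var_rv2)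
  have "(\<lambda>(u, f). (u, f i)) \<in> measurable (PiM A (\<lambda>_. borel) \<Otimes>\<^sub>M PiM {i} (\<lambda>_. borel)) (PiM A (\<lambda>_. borel) \<Otimes>\<^sub>M borel)"
    by measurable
  from measurable_comp[OF this H]
  have H2: "(\<lambda>(u, f). H u (f i)) \<in> borel_measurable (PiM A (\<lambda>_. borel) \<Otimes>\<^sub>M PiM {i} (\<lambda>_. borel))"
    by (simp add: comp_def case_prod_beta')
  have "(\<integral>\<^sup>+\<omega>. H (?ZA \<omega>) (Z i \<omega>) \<partial>M) = (\<integral>\<^sup>+\<omega>. (\<lambda>u f. H u (f i)) (?ZA \<omega>) (?Zi \<omega>) \<partial>M)"
    by simp
  also have "\<dots> = (\<integral>\<^sup>+\<omega>. (\<integral>\<^sup>+f. H (?ZA \<omega>) (f i) \<partial>distr M (PiM {i} (\<lambda>_. borel)) ?Zi) \<partial>M)"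
    by (rule nn_integral_indep_var[OF I]) (use H2 in simp)
  also have "\<dots> = (\<integral>\<^sup>+\<omega>. (\<integral>\<^sup>+v. H (?ZA \<omega>) v \<partial>distr M borel (Z i)) \<partial>M)"
  proof (rule nn_integral_cong)
    fix \<omega> assume "\<omega> \<in> space M"
    then have "H (?ZA \<omega>) \<in> borel_measurable borel"
      using measurable_Pair2[OF H measurable_space[OF rvA]] by simp
    then show "(\<integral>\<^sup>+f. H (?ZA \<omega>) (f i) \<partial>distr M (PiM {i} (\<lambda>_. borel)) ?Zi)
        = (\<integral>\<^sup>+v. H (?ZA \<omega>) v \<partial>distr M borel (Z i))"
      using rv1 rvi by (simp add: nn_integral_distr)
  qed
  finally show ?thesis .
qed

lemma (in prob_space) prob_indep_vars_blocks:
  assumes ind: "indep_vars (\<lambda>_. borel) Z I"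
    and K: "\<And>j. j \<in> J \<Longrightarrow> K j \<subseteq> I" and disj: "disjoint_family_on K J"
    and J: "finite J" "J \<noteq> {}"
    and f: "\<And>j. j \<in> J \<Longrightarrow> f j \<in> borel_measurable (PiM (K j) (\<lambda>_. borel))"
    and B: "\<And>j. j \<in> J \<Longrightarrow> B j \<in> sets borel"
  shows "prob (\<Inter>j\<in>J. {\<omega>\<in>space M. f j (restrict (\<lambda>i. Z i \<omega>) (K j)) \<in> B j})
       = (\<Prod>j\<in>J. prob {\<omega>\<in>space M. f j (restrict (\<lambda>i. Z i \<omega>) (K j)) \<in> B j})"
proof -
  have "indep_vars (\<lambda>j. PiM (K j) (\<lambda>_. borel)) (\<lambda>j \<omega>. restrict (\<lambda>i. Z i \<omega>) (K j)) J"
    by (rule indep_vars_restrict[OF ind K disj])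
  then have "indep_vars (\<lambda>_. borel) (\<lambda>j \<omega>. f j (restrict (\<lambda>i. Z i \<omega>) (K j))) J"
    using f by (rule indep_vars_compose2)
  from indep_varsD[OF this J(2) J(1) subset_refl] B show ?thesis
    by (simp add: vimage_def Int_def conj_commute)
qed

lemma (in prob_space) cdf_distr:
  "Z \<in> borel_measurable M \<Longrightarrow> cdf (distr M borel Z) t = prob {\<omega>\<in>space M. Z \<omega> \<le> t}"
  by (simp add: cdf_def measure_distr vimage_def Int_def conj_commute)

lemma (in prob_space) prob_le_pos_above_lower_end:
  assumes Z: "Z \<in> borel_measurable M" and ne: "\<exists>x\<ge>0. prob {\<omega>\<in>space M. Z \<omega> \<le> x} > 0"
    and t: "lower_end M Z < t"
  shows "prob {\<omega>\<in>space M. Z \<omega> \<le> t} > 0"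
proof -
  let ?S = "{x. x \<ge> 0 \<and> prob {\<omega>\<in>space M. Z \<omega> \<le> x} > 0}"
  from cInf_lessD[of ?S t] ne t obtain x where "x \<in> ?S" "x < t"
    by (auto simp: lower_end_def)
  moreover have "prob {\<omega>\<in>space M. Z \<omega> \<le> x} \<le> prob {\<omega>\<in>space M. Z \<omega> \<le> t}"
    using Z \<open>x < t\<close> by (intro finite_measure_mono) auto
  ultimately show ?thesis by auto
qed

lemma (in finite_measure) measure_le_sum_measure_AE:
  assumes I: "finite I" and S: "\<And>i. i \<in> I \<Longrightarrow> S i \<in> sets M" and E: "E \<in> sets M"
    and AE: "AE \<omega> in M. indicator E \<omega> \<le> c * (\<Sum>i\<in>I. indicator (S i) \<omega> :: real)"
  shows "measure M E \<le> c * (\<Sum>i\<in>I. measure M (S i))"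
proof -
  have "measure M E = integral\<^sup>L M (indicator E)"
    using E by (simp add: Int_absorb2 sets.sets_into_space)
  also have "\<dots> \<le> integral\<^sup>L M (\<lambda>\<omega>. c * (\<Sum>i\<in>I. indicator (S i) \<omega> :: real))"
    using AE E S by (intro integral_mono_AE)
      (auto intro!: integrable_mult_right integrable_sum integrable_real_indicator simp: emeasure_eq_measure)
  also have "\<dots> = c * (\<Sum>i\<in>I. integral\<^sup>L M (indicator (S i) :: 'a \<Rightarrow> real))"
    using S by (simp add: Bochner_Integration.integral_sum integrable_real_indicator emeasure_eq_measure)
  also have "\<dots> = c * (\<Sum>i\<in>I. measure M (S i))"
    using S by (simp add: Int_absorb2 sets.sets_into_space)
  finally show ?thesis .
qed

lemma borel_measurable_nn_integral_shift:
  fixes h :: "real \<Rightarrow> real \<Rightarrow> ennreal"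
  assumes N: "sigma_finite_measure N" "sets N = sets borel"
    and h[measurable]: "case_prod h \<in> borel_measurable (borel \<Otimes>\<^sub>M borel)"
  shows "(\<lambda>(x, w). \<integral>\<^sup>+y. h x (w + y) \<partial>N) \<in> borel_measurable (borel \<Otimes>\<^sub>M borel)"
proof -
  interpret N: sigma_finite_measure N by (fact N(1))
  have "(\<lambda>(xw, y). h (fst xw) (snd xw + y)) \<in> borel_measurable ((borel \<Otimes>\<^sub>M borel) \<Otimes>\<^sub>M N)"
    using N(2) by (simp cong: measurable_cong_sets) measurable
  from N.borel_measurable_nn_integral[OF this] show ?thesis
    by (simp add: case_prod_beta')
qed

section \<open>Counting, binomial weights and ratios of weighted sums\<close>

lemma half_of_summands_small:
  fixes y :: "nat \<Rightarrow> real"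
  assumes I: "finite I" "card I = k" and pos: "\<And>i. i \<in> I \<Longrightarrow> y i > 0"
    and sum: "(\<Sum>i\<in>I. y i) < a" and s: "s > 0" "2 * \<bar>a\<bar> + 1 \<le> real k * s"
  shows "real k \<le> 2 * real (card {i\<in>I. (\<Sum>j\<in>I-{i}. y j) \<le> a \<and> y i \<le> s})"
proof -
  define C where "C = {i\<in>I. y i \<le> s}"
  have "\<And>i. i \<in> I - C \<Longrightarrow> s \<le> y i" by (auto simp: C_def)
  from sum_bounded_below[of "I - C" s y, OF this]
  have "real (card (I - C)) * s \<le> (\<Sum>i\<in>I - C. y i)" by (simp add: mult.commute)
  also have "\<dots> \<le> (\<Sum>i\<in>I. y i)"
    using I pos by (intro sum_mono2) (auto simp: less_imp_le)
  finally have "2 * real (card (I - C)) * s < real k * s"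
    using sum s by linarith
  then have "2 * real (card (I - C)) < real k"
    using s by simp
  moreover have "real (card (I - C)) = real k - real (card C)"
    using I card_mono[of I C] by (simp add: C_def card_Diff_subset of_nat_diff)
  ultimately have "real k \<le> 2 * real (card C)" by linarith
  also have "C = {i\<in>I. (\<Sum>j\<in>I-{i}. y j) \<le> a \<and> y i \<le> s}"
    using I sum pos by (force simp: C_def sum_diff1)
  finally show ?thesis .
qed

lemma Sup_enat_image_eq_infinity_iff: "Sup (enat ` S) = \<infinity> \<longleftrightarrow> infinite S"
  by (auto simp: Sup_enat_def finite_image_iff inj_on_def dest: Max_in[OF finite_imageI])

lemma Sup_enat_image_finite: "finite S \<Longrightarrow> S \<noteq> {} \<Longrightarrow> Sup (enat ` S) = enat (Max S)"
  by (simp add: Sup_enat_def mono_Max_commute mono_def)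

lemma binomial_mult_le_binomial:
  assumes "k < K" "K \<le> m"
  shows "real (m choose k) * real m \<le> real K ^ K * real (m choose K)"
proof -
  have "real (m choose k) * real m \<le> real m ^ k * real m"
    using binomial_le_pow[of k m] assms
    by (intro mult_right_mono) (simp_all add: of_nat_power[symmetric] del: of_nat_power)
  also have "\<dots> = real m ^ (k + 1)" by simp
  also have "\<dots> \<le> real m ^ K" using assms by (intro power_increasing) auto
  also have "\<dots> = real K ^ K * (real m / real K) ^ K" using assms by (simp add: power_divide)
  also have "\<dots> \<le> real K ^ K * real (m choose K)"
    using binomial_ge_n_over_k_pow_k[OF assms(2), where 'a=real] by (intro mult_left_mono) auto
  finally show ?thesis .
qed

lemma pmf_binomial_mult_le:
  assumes p: "0 < p" "p < 1" and "k < K" "K \<le> m"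
  shows "pmf (binomial_pmf m p) k * real m
           \<le> real K ^ K * ((1 - p) / p) ^ (K - k) * pmf (binomial_pmf m p) K"
proof -
  have "p ^ k * (1 - p) ^ (m - k) = p ^ K * (1 - p) ^ (m - K) * ((1 - p) / p) ^ (K - k)"
  proof -
    have "p ^ K = p ^ k * p ^ (K - k)" "(1 - p) ^ (m - k) = (1 - p) ^ (m - K) * (1 - p) ^ (K - k)"
      using assms by (simp_all flip: power_add)
    then show ?thesis using p by (simp add: power_divide)
  qed
  then have "pmf (binomial_pmf m p) k * real m
      = real (m choose k) * real m * (p ^ K * (1 - p) ^ (m - K) * ((1 - p) / p) ^ (K - k))"
    using p by simp
  also have "\<dots> \<le> real K ^ K * real (m choose K) * (p ^ K * (1 - p) ^ (m - K) * ((1 - p) / p) ^ (K - k))"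
    using binomial_mult_le_binomial[OF assms(3,4)] p by (intro mult_right_mono) auto
  also have "\<dots> = real K ^ K * ((1 - p) / p) ^ (K - k) * pmf (binomial_pmf m p) K"
    using p by simp
  finally show ?thesis .
qed

lemma pmf_binomial_ratio_tendsto_0:
  assumes p: "0 < p" "p < 1" and "k < K"
  shows "(\<lambda>m. pmf (binomial_pmf m p) k / pmf (binomial_pmf m p) K) \<longlonglongrightarrow> 0"
proof (rule Lim_null_comparison)
  define C where "C = real K ^ K * ((1 - p) / p) ^ (K - k)"
  show "(\<lambda>m. C / real m) \<longlonglongrightarrow> 0" by (rule lim_const_over_n)
  show "\<forall>\<^sub>F m in sequentially. norm (pmf (binomial_pmf m p) k / pmf (binomial_pmf m p) K) \<le> C / real m"
    using eventually_ge_at_top[of K]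
  proof eventually_elim
    case (elim m)
    then have "pmf (binomial_pmf m p) K > 0" "real m > 0"
      using p \<open>k < K\<close> by auto
    with pmf_binomial_mult_le[OF p \<open>k < K\<close> elim, folded C_def] show ?case
      by (simp add: field_simps)
  qed
qed

lemma pmf_binomial_eventually_le:
  assumes p: "0 < p" "p \<le> 1" and "k < K" and c: "c > 0"
  shows "\<forall>\<^sub>F m in sequentially. pmf (binomial_pmf m p) k \<le> c * pmf (binomial_pmf m p) K"
proof (cases "p = 1")
  case True
  with \<open>k < K\<close> c show ?thesis
    by (intro eventually_mono[OF eventually_ge_at_top[of K]]) (auto simp: power_0_left)
next
  case False
  with p have p': "p < 1" by simp
  have "\<forall>\<^sub>F m in sequentially. pmf (binomial_pmf m p) k / pmf (binomial_pmf m p) K < c"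
    using pmf_binomial_ratio_tendsto_0[OF p(1) p' \<open>k < K\<close>] c by (rule order_tendstoD)
  with eventually_ge_at_top[of K] show ?thesis
  proof eventually_elim
    case (elim m)
    then have "pmf (binomial_pmf m p) K > 0" using p p' by auto
    with elim show ?case by (simp add: divide_less_eq less_imp_le)
  qed
qed

lemma weighted_sum_le_by_dominant_index:
  fixes w q r :: "nat \<Rightarrow> real"
  assumes w: "\<And>k. w k \<ge> 0" and q: "\<And>k. q k \<le> 1" and r: "\<And>k. r k \<ge> 0" and e: "e \<ge> 0"
    and "k0 \<le> m" and dominated: "\<And>k. k < k0 \<Longrightarrow> w k \<le> c * w k0" and c: "real k0 * c \<le> e * r k0"
    and small: "\<And>k. k0 \<le> k \<Longrightarrow> q k \<le> e * r k"
  shows "(\<Sum>k\<le>m. w k * q k) \<le> 2 * e * (\<Sum>k\<le>m. w k * r k)"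
proof -
  let ?D = "\<Sum>k\<le>m. w k * r k"
  have "(\<Sum>k\<le>m. w k * q k) \<le> (\<Sum>k\<le>m. (if k < k0 then w k else 0) + e * (w k * r k))"
  proof (intro sum_mono)
    fix k
    have "w k * q k \<le> w k" "0 \<le> e * (w k * r k)"
      using mult_left_mono[OF q w, of k k] w[of k] r[of k] e by simp_all
    moreover have "w k * q k \<le> e * (w k * r k)" if "k0 \<le> k"
      using mult_left_mono[OF small[OF that] w] by (simp add: mult_ac)
    ultimately show "w k * q k \<le> (if k < k0 then w k else 0) + e * (w k * r k)"
      by (auto simp: not_less)
  qed
  also have "\<dots> = (\<Sum>k<k0. w k) + e * ?D"
  proof -
    have "{..m} \<inter> {k. k < k0} = {..<k0}" using \<open>k0 \<le> m\<close> by auto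
    then show ?thesis by (simp add: sum.distrib sum.If_cases sum_distrib_left)
  qed
  also have "(\<Sum>k<k0. w k) \<le> real k0 * c * w k0"
    using sum_bounded_above[of "{..<k0}" w "c * w k0"] dominated by (simp add: mult_ac)
  also have "\<dots> \<le> e * (w k0 * r k0)"
    using mult_right_mono[OF c w[of k0]] by (simp add: mult_ac)
  also have "w k0 * r k0 \<le> ?D"
    using \<open>k0 \<le> m\<close> w r by (intro member_le_sum mult_nonneg_nonneg) auto
  finally show ?thesis
    using e by (simp add: mult_left_mono)
qed

lemma weighted_ratio_tendsto_0:
  fixes w :: "nat \<Rightarrow> nat \<Rightarrow> real" and q r :: "nat \<Rightarrow> real"
  assumes w: "\<And>m k. w m k \<ge> 0" and q: "\<And>k. 0 \<le> q k" "\<And>k. q k \<le> 1" and r: "\<And>k. r k > 0"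
    and w_dominated: "\<And>k K c. k < K \<Longrightarrow> c > 0 \<Longrightarrow> \<forall>\<^sub>F m in sequentially. w m k \<le> c * w m K"
    and q_negligible: "\<And>e. e > 0 \<Longrightarrow> \<exists>k0. \<forall>k\<ge>k0. q k \<le> e * r k"
  shows "(\<lambda>m. (\<Sum>k\<le>m. w m k * q k) / (\<Sum>k\<le>m. w m k * r k)) \<longlonglongrightarrow> 0"
proof (rule order_tendstoI)
  fix a :: real assume "a < 0"
  have "0 \<le> (\<Sum>k\<le>m. w m k * q k) / (\<Sum>k\<le>m. w m k * r k)" for m
    using w q r by (intro divide_nonneg_nonneg sum_nonneg mult_nonneg_nonneg) (auto intro: less_imp_le)
  with \<open>a < 0\<close> show "\<forall>\<^sub>F m in sequentially. a < (\<Sum>k\<le>m. w m k * q k) / (\<Sum>k\<le>m. w m k * r k)"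
    by (auto intro: always_eventually less_le_trans)
next
  fix e :: real assume e: "e > 0"
  then obtain k0 where k0: "\<And>k. k0 \<le> k \<Longrightarrow> q k \<le> (e / 4) * r k"
    using q_negligible[of "e / 4"] by auto
  define c where "c = e * r k0 / (4 * (real k0 + 1))"
  have "c > 0" using e r[of k0] by (simp add: c_def)
  have c: "real k0 * c \<le> (e / 4) * r k0"
    using e r[of k0] by (simp add: c_def field_simps)
  have "\<forall>\<^sub>F m in sequentially. (\<forall>k\<in>{..<k0}. w m k \<le> c * w m k0) \<and> k0 \<le> m"
    using \<open>c > 0\<close> by (intro eventually_conj eventually_ball_finite ballI w_dominated eventually_ge_at_top) auto
  then show "\<forall>\<^sub>F m in sequentially. (\<Sum>k\<le>m. w m k * q k) / (\<Sum>k\<le>m. w m k * r k) < e"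
  proof eventually_elim
    case (elim m)
    then have "(\<Sum>k\<le>m. w m k * q k) \<le> 2 * (e / 4) * (\<Sum>k\<le>m. w m k * r k)"
      using w q r e k0 c by (intro weighted_sum_le_by_dominant_index) (auto intro: less_imp_le)
    moreover have "(\<Sum>k\<le>m. w m k * r k) \<ge> 0"
      using w r by (intro sum_nonneg mult_nonneg_nonneg) (auto intro: less_imp_le)
    ultimately show ?case
      using e by (cases "(\<Sum>k\<le>m. w m k * r k) = 0") (auto simp: divide_le_eq intro: le_less_trans[of _ "e/2"])
  qed
qed

lemma weighted_ratio_tendsto:
  fixes w :: "nat \<Rightarrow> nat \<Rightarrow> real" and q r :: "nat \<Rightarrow> real"
  assumes w_pos: "\<forall>\<^sub>F m in sequentially. w m K > 0"
    and w_ratio: "\<And>k. k < K \<Longrightarrow> (\<lambda>m. w m k / w m K) \<longlonglongrightarrow> 0"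
    and q: "\<And>k. K < k \<Longrightarrow> q k = 0" and r: "\<And>k. K < k \<Longrightarrow> r k = 0" "r K > 0"
  shows "(\<lambda>m. (\<Sum>k\<le>m. w m k * q k) / (\<Sum>k\<le>m. w m k * r k)) \<longlonglongrightarrow> q K / r K"
proof -
  let ?g = "\<lambda>f m. f K + (\<Sum>k<K. w m k / w m K * f k)"
  have g: "(?g f) \<longlonglongrightarrow> f K + 0" for f
    by (intro tendsto_add tendsto_const tendsto_null_sum tendsto_mult_left_zero w_ratio) auto
  have sum_eq: "(\<Sum>k\<le>m. w m k * f k) = w m K * ?g f m"
    if "K \<le> m" "w m K > 0" "\<And>k. K < k \<Longrightarrow> f k = 0" for f m
  proof -
    have "(\<Sum>k\<le>m. w m k * f k) = (\<Sum>k\<le>K. w m k * f k)"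
      using that by (intro sum.mono_neutral_right) auto
    also have "\<dots> = w m K * ?g f m"
      using that(2) by (simp add: lessThan_Suc_atMost[symmetric] sum_distrib_left field_simps)
    finally show ?thesis .
  qed
  have "\<forall>\<^sub>F m in sequentially. ?g q m / ?g r m = (\<Sum>k\<le>m. w m k * q k) / (\<Sum>k\<le>m. w m k * r k)"
    using w_pos eventually_ge_at_top[of K]
    by eventually_elim (simp add: sum_eq q r)
  moreover have "(\<lambda>m. ?g q m / ?g r m) \<longlonglongrightarrow> q K / r K"
    using tendsto_divide[OF g g] r by simp
  ultimately show ?thesis by (rule Lim_transform_eventually[rotated])
qed

lemma nn_integral_binomial_pmf_Suc:
  fixes \<phi> :: "nat \<Rightarrow> ennreal"
  assumes "0 \<le> p" "p \<le> 1"
  shows "(\<integral>\<^sup>+k. \<phi> k \<partial>binomial_pmf (Suc n) p)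
       = ennreal (1 - p) * (\<integral>\<^sup>+k. \<phi> k \<partial>binomial_pmf n p) + ennreal p * (\<integral>\<^sup>+k. \<phi> (Suc k) \<partial>binomial_pmf n p)"
  using assms by (simp add: binomial_pmf_Suc mult.commute add.commute)

section \<open>Zero-inflated increments and the binomial decomposition\<close>

locale zero_inflated_walk = prob_space M for M :: "'a measure" +
  fixes X Y :: "nat \<Rightarrow> 'a \<Rightarrow> real"
  assumes indep: "indep_vars (\<lambda>_. borel)
          (\<lambda>i. case i of Inl k \<Rightarrow> X k | Inr k \<Rightarrow> Y k)
          (Inl ` {1..} \<union> Inr ` {2..})"
    and nonneg: "\<And>k \<omega>. k \<ge> 1 \<Longrightarrow> \<omega> \<in> space M \<Longrightarrow> X k \<omega> \<ge> 0"
    and X_id: "\<And>k. k \<ge> 2 \<Longrightarrow> distr M borel (X k) = distr M borel (X 2)"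
    and p_pos: "measure M {\<omega> \<in> space M. X 2 \<omega> > 0} > 0"
    and Y_id: "\<And>k. k \<ge> 2 \<Longrightarrow> distr M borel (Y k) = distr M borel (Y 2)"
    and Y_law: "\<And>k U. k \<ge> 2 \<Longrightarrow> U \<in> sets borel \<Longrightarrow>
          measure M {\<omega> \<in> space M. Y k \<omega> \<in> U} =
          cond_prob M (\<lambda>\<omega>. X k \<omega> \<in> U) (\<lambda>\<omega>. X k \<omega> > 0)"
begin

definition XY :: "nat + nat \<Rightarrow> 'a \<Rightarrow> real" where
  "XY i = (case i of Inl k \<Rightarrow> X k | Inr k \<Rightarrow> Y k)"

definition XY_index :: "(nat + nat) set" where
  "XY_index = Inl ` {1..} \<union> Inr ` {2..}"

definition pos_prob :: real where
  "pos_prob = prob {\<omega>\<in>space M. X 2 \<omega> > 0}"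

definition law_X :: "real measure" where
  "law_X = distr M borel (X 2)"

definition law_Y :: "real measure" where
  "law_Y = distr M borel (Y 2)"

lemma indep_XY: "indep_vars (\<lambda>_. borel) XY XY_index"
  using indep unfolding XY_def[abs_def] XY_index_def .

lemma XY_simps [simp]: "XY (Inl k) = X k" "XY (Inr k) = Y k"
  by (simp_all add: XY_def)

lemma measurable_XY: "i \<in> XY_index \<Longrightarrow> XY i \<in> borel_measurable M"
  using indep_XY by (simp add: indep_vars_def2)

lemma measurable_X [measurable]: "1 \<le> k \<Longrightarrow> X k \<in> borel_measurable M"
  using measurable_XY[of "Inl k"] by (simp add: XY_index_def)

lemma measurable_Y [measurable]: "2 \<le> k \<Longrightarrow> Y k \<in> borel_measurable M"
  using measurable_XY[of "Inr k"] by (simp add: XY_index_def)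

lemma measurable_frakS [measurable]: "frakS Y k \<in> borel_measurable M"
  unfolding frakS_def by measurable

lemma frakS_Suc: "frakS Y (Suc k) \<omega> = frakS Y k \<omega> + Y (k + 2) \<omega>"
  by (simp add: frakS_def)

lemma distr_X: "2 \<le> k \<Longrightarrow> distr M borel (X k) = law_X"
  unfolding law_X_def by (rule X_id)

lemma distr_Y: "2 \<le> k \<Longrightarrow> distr M borel (Y k) = law_Y"
  unfolding law_Y_def by (rule Y_id)

lemma pos_prob_pos: "0 < pos_prob"
  using p_pos by (simp add: pos_prob_def)

lemma pos_prob_le_1: "pos_prob \<le> 1"
  by (simp add: pos_prob_def)

lemma law_X_nonpos: "emeasure law_X {..0} = ennreal (1 - pos_prob)"
proof -
  have "{\<omega>\<in>space M. X 2 \<omega> \<le> 0} = space M - {\<omega>\<in>space M. X 2 \<omega> > 0}" by auto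
  then show ?thesis
    by (simp add: law_X_def emeasure_distr emeasure_eq_measure vimage_def Int_def conj_commute
        prob_compl pos_prob_def)
qed

lemma law_Y_eq_density: "law_Y = density law_X (\<lambda>x. ennreal (1 / pos_prob) * indicator {0<..} x)"
proof (rule measure_eqI)
  fix U assume "U \<in> sets law_Y"
  then have U: "U \<in> sets borel" by (simp add: law_Y_def)
  have "emeasure law_Y U = ennreal (prob {\<omega>\<in>space M. X 2 \<omega> \<in> U \<inter> {0<..}} / pos_prob)"
    using U Y_law[of 2 U]
    by (simp add: law_Y_def emeasure_distr emeasure_eq_measure vimage_def Int_def conj_commute
        cond_prob_def pos_prob_def)
  also have "\<dots> = ennreal (1 / pos_prob) * emeasure law_X (U \<inter> {0<..})"
    using U pos_prob_pos
    by (simp add: law_X_def emeasure_distr emeasure_eq_measure vimage_def Int_def conj_commute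
        flip: ennreal_mult)
  also have "\<dots> = (\<integral>\<^sup>+x. ennreal (1 / pos_prob) * indicator (U \<inter> {0<..}) x \<partial>law_X)"
    using U by (simp add: law_X_def nn_integral_cmult_indicator)
  also have "\<dots> = emeasure (density law_X (\<lambda>x. ennreal (1 / pos_prob) * indicator {0<..} x)) U"
    using U by (subst emeasure_density) (auto simp: law_X_def intro!: nn_integral_cong split: split_indicator)
  finally show "emeasure law_Y U = emeasure (density law_X (\<lambda>x. ennreal (1 / pos_prob) * indicator {0<..} x)) U" .
qed (simp add: law_X_def law_Y_def)

lemma real_distribution_law_Y: "real_distribution law_Y"
  by (simp add: law_Y_def)

lemma nn_integral_law_X:
  assumes g[measurable]: "g \<in> borel_measurable borel"
  shows "(\<integral>\<^sup>+v. g v \<partial>law_X) = ennreal (1 - pos_prob) * g 0 + ennreal pos_prob * (\<integral>\<^sup>+y. g y \<partial>law_Y)"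
proof -
  have "AE v in law_X. 0 \<le> v"
    unfolding law_X_def using nonneg[of 2] by (subst AE_distr_iff) auto
  then have "(\<integral>\<^sup>+v. g v \<partial>law_X) = (\<integral>\<^sup>+v. g 0 * indicator {..0} v + g v * indicator {0<..} v \<partial>law_X)"
    by (intro nn_integral_cong_AE) (auto elim!: eventually_mono split: split_indicator)
  also have "\<dots> = g 0 * emeasure law_X {..0} + (\<integral>\<^sup>+v. g v * indicator {0<..} v \<partial>law_X)"
    by (subst nn_integral_add) (auto simp: law_X_def nn_integral_cmult_indicator)
  also have "(\<integral>\<^sup>+v. g v * indicator {0<..} v \<partial>law_X) = ennreal pos_prob * (\<integral>\<^sup>+y. g y \<partial>law_Y)"
  proof -
    have "(\<integral>\<^sup>+y. g y \<partial>law_Y) = ennreal (1 / pos_prob) * (\<integral>\<^sup>+v. g v * indicator {0<..} v \<partial>law_X)"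
      unfolding law_Y_eq_density
      by (subst nn_integral_density) (auto simp: law_X_def mult_ac simp flip: nn_integral_cmult)
    moreover have "ennreal pos_prob * ennreal (1 / pos_prob) = 1"
      using pos_prob_pos by (simp flip: ennreal_mult)
    ultimately show ?thesis by (simp add: mult.assoc[symmetric])
  qed
  finally show ?thesis by (simp add: law_X_nonpos mult.commute)
qed

lemma nn_integral_XY_add_component:
  fixes h :: "real \<Rightarrow> real \<Rightarrow> ennreal"
  assumes A: "A \<subseteq> XY_index" "i \<in> XY_index" "i \<notin> A"
    and [measurable]: "f \<in> borel_measurable (PiM A (\<lambda>_. borel))" "g \<in> borel_measurable (PiM A (\<lambda>_. borel))"
      "case_prod h \<in> borel_measurable (borel \<Otimes>\<^sub>M borel)"
  shows "(\<integral>\<^sup>+\<omega>. h (f (restrict (\<lambda>j. XY j \<omega>) A)) (g (restrict (\<lambda>j. XY j \<omega>) A) + XY i \<omega>) \<partial>M)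
       = (\<integral>\<^sup>+\<omega>. \<integral>\<^sup>+v. h (f (restrict (\<lambda>j. XY j \<omega>) A)) (g (restrict (\<lambda>j. XY j \<omega>) A) + v)
            \<partial>distr M borel (XY i) \<partial>M)"
  by (rule nn_integral_indep_vars_component[OF indep_XY A, where H="\<lambda>u v. h (f u) (g u + v)"]) measurable

lemma borel_measurable_nn_integral_law_Y_shift:
  fixes h :: "real \<Rightarrow> real \<Rightarrow> ennreal"
  shows "case_prod h \<in> borel_measurable (borel \<Otimes>\<^sub>M borel) \<Longrightarrow>
     (\<lambda>(x, w). \<integral>\<^sup>+y. h x (w + y) \<partial>law_Y) \<in> borel_measurable (borel \<Otimes>\<^sub>M borel)"
  by (intro borel_measurable_nn_integral_shift prob_space_imp_sigma_finite)
    (simp_all add: law_Y_def prob_space_distr)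

lemma nn_integral_add_X:
  fixes h :: "real \<Rightarrow> real \<Rightarrow> ennreal" and n :: nat
  assumes h[measurable]: "case_prod h \<in> borel_measurable (borel \<Otimes>\<^sub>M borel)"
  defines "T \<equiv> \<lambda>\<omega>. \<Sum>j\<in>{2..n+1}. X j \<omega>"
  shows "(\<integral>\<^sup>+\<omega>. h (X 1 \<omega>) (T \<omega> + X (n+2) \<omega>) \<partial>M)
       = ennreal (1 - pos_prob) * (\<integral>\<^sup>+\<omega>. h (X 1 \<omega>) (T \<omega>) \<partial>M)
         + ennreal pos_prob * (\<integral>\<^sup>+\<omega>. \<integral>\<^sup>+y. h (X 1 \<omega>) (T \<omega> + y) \<partial>law_Y \<partial>M)"
proof -
  define A :: "(nat + nat) set" where "A = Inl ` {1..n+1}"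
  have A: "A \<subseteq> XY_index" "Inl (n+2) \<in> XY_index" "Inl (n+2) \<notin> A"
    by (auto simp: A_def XY_index_def)
  have [measurable]: "(\<lambda>u::nat + nat \<Rightarrow> real. u (Inl 1)) \<in> borel_measurable (PiM A (\<lambda>_. borel))"
    unfolding A_def by measurable
  have [measurable]: "(\<lambda>u::nat + nat \<Rightarrow> real. \<Sum>j\<in>{2..n+1}. u (Inl j)) \<in> borel_measurable (PiM A (\<lambda>_. borel))"
    unfolding A_def by (intro borel_measurable_sum measurable_component_singleton) auto
  note h' [measurable] = borel_measurable_nn_integral_law_Y_shift[OF h]
  have [measurable]: "T \<in> borel_measurable M" unfolding T_def by measurable
  have "(\<integral>\<^sup>+\<omega>. h (X 1 \<omega>) (T \<omega> + X (n+2) \<omega>) \<partial>M) = (\<integral>\<^sup>+\<omega>. \<integral>\<^sup>+v. h (X 1 \<omega>) (T \<omega> + v) \<partial>law_X \<partial>M)"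
    using nn_integral_XY_add_component[OF A, of "\<lambda>u. u (Inl 1)" "\<lambda>u. \<Sum>j\<in>{2..n+1}. u (Inl j)" h]
    by (simp add: A_def T_def distr_X)
  also have "\<dots> = (\<integral>\<^sup>+\<omega>. ennreal (1 - pos_prob) * h (X 1 \<omega>) (T \<omega>)
                     + ennreal pos_prob * (\<integral>\<^sup>+y. h (X 1 \<omega>) (T \<omega> + y) \<partial>law_Y) \<partial>M)"
  proof (intro nn_integral_cong)
    fix \<omega>
    have "(\<lambda>v. h (X 1 \<omega>) (T \<omega> + v)) \<in> borel_measurable borel" by measurable
    from nn_integral_law_X[OF this] show "(\<integral>\<^sup>+v. h (X 1 \<omega>) (T \<omega> + v) \<partial>law_X)
        = ennreal (1 - pos_prob) * h (X 1 \<omega>) (T \<omega>) + ennreal pos_prob * (\<integral>\<^sup>+y. h (X 1 \<omega>) (T \<omega> + y) \<partial>law_Y)"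
      by simp
  qed
  also have "\<dots> = ennreal (1 - pos_prob) * (\<integral>\<^sup>+\<omega>. h (X 1 \<omega>) (T \<omega>) \<partial>M)
         + ennreal pos_prob * (\<integral>\<^sup>+\<omega>. \<integral>\<^sup>+y. h (X 1 \<omega>) (T \<omega> + y) \<partial>law_Y \<partial>M)"
    by (subst nn_integral_add) (auto simp: nn_integral_cmult)
  finally show ?thesis .
qed

lemma nn_integral_frakS_Suc:
  fixes h :: "real \<Rightarrow> real \<Rightarrow> ennreal"
  assumes h[measurable]: "case_prod h \<in> borel_measurable (borel \<Otimes>\<^sub>M borel)"
  shows "(\<integral>\<^sup>+\<omega>. \<integral>\<^sup>+y. h (X 1 \<omega>) (frakS Y k \<omega> + y) \<partial>law_Y \<partial>M) = (\<integral>\<^sup>+\<omega>. h (X 1 \<omega>) (frakS Y (Suc k) \<omega>) \<partial>M)"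
proof -
  define A :: "(nat + nat) set" where "A = insert (Inl 1) (Inr ` {2..k+1})"
  have A: "A \<subseteq> XY_index" "Inr (k+2) \<in> XY_index" "Inr (k+2) \<notin> A"
    by (auto simp: A_def XY_index_def)
  have [measurable]: "(\<lambda>u::nat + nat \<Rightarrow> real. u (Inl 1)) \<in> borel_measurable (PiM A (\<lambda>_. borel))"
    unfolding A_def by measurable
  have [measurable]: "(\<lambda>u::nat + nat \<Rightarrow> real. \<Sum>j\<in>{2..k+1}. u (Inr j)) \<in> borel_measurable (PiM A (\<lambda>_. borel))"
    unfolding A_def by (intro borel_measurable_sum measurable_component_singleton) auto
  from nn_integral_XY_add_component[OF A, of "\<lambda>u. u (Inl 1)" "\<lambda>u. \<Sum>j\<in>{2..k+1}. u (Inr j)" h]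
  have "(\<integral>\<^sup>+\<omega>. h (X 1 \<omega>) (frakS Y k \<omega> + Y (k+2) \<omega>) \<partial>M)
      = (\<integral>\<^sup>+\<omega>. \<integral>\<^sup>+y. h (X 1 \<omega>) (frakS Y k \<omega> + y) \<partial>law_Y \<partial>M)"
    by (simp add: A_def distr_Y frakS_def del: sum.cl_ivl_Suc)
  then show ?thesis by (simp add: frakS_Suc)
qed

lemma nn_integral_sum_X_binomial:
  fixes h :: "real \<Rightarrow> real \<Rightarrow> ennreal"
  assumes "case_prod h \<in> borel_measurable (borel \<Otimes>\<^sub>M borel)"
  shows "(\<integral>\<^sup>+\<omega>. h (X 1 \<omega>) (\<Sum>j\<in>{2..n+1}. X j \<omega>) \<partial>M)
       = (\<integral>\<^sup>+k. (\<integral>\<^sup>+\<omega>. h (X 1 \<omega>) (frakS Y k \<omega>) \<partial>M) \<partial>binomial_pmf n pos_prob)"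
  using assms
proof (induction n arbitrary: h)
  case 0
  then show ?case
    using pos_prob_pos pos_prob_le_1 by (simp add: binomial_pmf_0 frakS_def)
next
  case (Suc n)
  let ?\<phi> = "\<lambda>h k. \<integral>\<^sup>+\<omega>. h (X 1 \<omega>) (frakS Y k \<omega>) \<partial>M"
  let ?T = "\<lambda>\<omega>. \<Sum>j\<in>{2..n+1}. X j \<omega>"
  have "(\<Sum>j\<in>{2..Suc n+1}. X j \<omega>) = ?T \<omega> + X (n+2) \<omega>" for \<omega>
    by simp
  then have "(\<integral>\<^sup>+\<omega>. h (X 1 \<omega>) (\<Sum>j\<in>{2..Suc n+1}. X j \<omega>) \<partial>M) = (\<integral>\<^sup>+\<omega>. h (X 1 \<omega>) (?T \<omega> + X (n+2) \<omega>) \<partial>M)"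
    by (simp only:)
  also have "\<dots> = ennreal (1 - pos_prob) * (\<integral>\<^sup>+\<omega>. h (X 1 \<omega>) (?T \<omega>) \<partial>M)
      + ennreal pos_prob * (\<integral>\<^sup>+\<omega>. \<integral>\<^sup>+y. h (X 1 \<omega>) (?T \<omega> + y) \<partial>law_Y \<partial>M)"
    by (rule nn_integral_add_X[OF Suc.prems])
  also have "\<dots> = ennreal (1 - pos_prob) * (\<integral>\<^sup>+k. ?\<phi> h k \<partial>binomial_pmf n pos_prob)
      + ennreal pos_prob * (\<integral>\<^sup>+k. ?\<phi> h (Suc k) \<partial>binomial_pmf n pos_prob)"
    by (simp only: Suc.IH[OF Suc.prems] Suc.IH[OF borel_measurable_nn_integral_law_Y_shift[OF Suc.prems]]
        nn_integral_frakS_Suc[OF Suc.prems])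
  also have "\<dots> = (\<integral>\<^sup>+k. ?\<phi> h k \<partial>binomial_pmf (Suc n) pos_prob)"
    using pos_prob_pos pos_prob_le_1 by (simp add: nn_integral_binomial_pmf_Suc)
  finally show ?case .
qed

lemma partS_Suc_eq: "partS X (Suc n) \<omega> = X 1 \<omega> + (\<Sum>j\<in>{2..n+1}. X j \<omega>)"
  unfolding partS_def by (subst sum.atLeast_Suc_atMost) (auto simp: numeral_2_eq_2)

lemma prob_partS_binomial:
  assumes B[measurable]: "B \<in> sets borel"
  shows "prob {\<omega>\<in>space M. X 1 \<omega> \<in> B \<and> partS X (Suc n) \<omega> \<le> L}
       = (\<Sum>k\<le>n. pmf (binomial_pmf n pos_prob) k * prob {\<omega>\<in>space M. X 1 \<omega> \<in> B \<and> X 1 \<omega> + frakS Y k \<omega> \<le> L})"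
proof -
  define h where "h x s = (indicator B x * indicator {..L} (x + s) :: ennreal)" for x s
  have h[measurable]: "case_prod h \<in> borel_measurable (borel \<Otimes>\<^sub>M borel)"
    unfolding h_def by measurable
  have emeasure_eq: "emeasure M {\<omega>\<in>space M. X 1 \<omega> \<in> B \<and> X 1 \<omega> + s \<omega> \<le> L} = (\<integral>\<^sup>+\<omega>. h (X 1 \<omega>) (s \<omega>) \<partial>M)"
    if [measurable]: "s \<in> borel_measurable M" for s
  proof -
    have "(\<integral>\<^sup>+\<omega>. h (X 1 \<omega>) (s \<omega>) \<partial>M) = (\<integral>\<^sup>+\<omega>. indicator {\<omega>\<in>space M. X 1 \<omega> \<in> B \<and> X 1 \<omega> + s \<omega> \<le> L} \<omega> \<partial>M)"
      by (intro nn_integral_cong) (auto simp: h_def split: split_indicator)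
    then show ?thesis by simp
  qed
  have set_pmf: "set_pmf (binomial_pmf n pos_prob) \<subseteq> {..n}"
    using pos_prob_pos pos_prob_le_1 by (auto simp: set_pmf_binomial_eq)
  have "ennreal (prob {\<omega>\<in>space M. X 1 \<omega> \<in> B \<and> partS X (Suc n) \<omega> \<le> L})
      = (\<integral>\<^sup>+\<omega>. h (X 1 \<omega>) (\<Sum>j\<in>{2..n+1}. X j \<omega>) \<partial>M)"
    using emeasure_eq[of "\<lambda>\<omega>. \<Sum>j\<in>{2..n+1}. X j \<omega>"] by (simp add: partS_Suc_eq emeasure_eq_measure)
  also have "\<dots> = (\<integral>\<^sup>+k. (\<integral>\<^sup>+\<omega>. h (X 1 \<omega>) (frakS Y k \<omega>) \<partial>M) \<partial>binomial_pmf n pos_prob)"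
    by (rule nn_integral_sum_X_binomial[OF h])
  also have "\<dots> = (\<integral>\<^sup>+k. ennreal (prob {\<omega>\<in>space M. X 1 \<omega> \<in> B \<and> X 1 \<omega> + frakS Y k \<omega> \<le> L}) \<partial>binomial_pmf n pos_prob)"
    using emeasure_eq[OF measurable_frakS] by (simp add: emeasure_eq_measure)
  also have "\<dots> = (\<Sum>k\<le>n. ennreal (pmf (binomial_pmf n pos_prob) k * prob {\<omega>\<in>space M. X 1 \<omega> \<in> B \<and> X 1 \<omega> + frakS Y k \<omega> \<le> L}))"
    using set_pmf by (subst nn_integral_measure_pmf_support[of "{..n}"]) (auto simp: ennreal_mult' mult.commute)
  finally have "ennreal (prob {\<omega>\<in>space M. X 1 \<omega> \<in> B \<and> partS X (Suc n) \<omega> \<le> L})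
      = ennreal (\<Sum>k\<le>n. pmf (binomial_pmf n pos_prob) k * prob {\<omega>\<in>space M. X 1 \<omega> \<in> B \<and> X 1 \<omega> + frakS Y k \<omega> \<le> L})"
    by simp
  then show ?thesis by (subst (asm) ennreal_inj) (auto intro!: sum_nonneg)
qed

lemma prob_Y_le: "2 \<le> j \<Longrightarrow> prob {\<omega>\<in>space M. Y j \<omega> \<le> t} = cdf law_Y t"
  by (simp flip: distr_Y add: cdf_distr)

lemma cdf_law_Y_0: "cdf law_Y 0 = 0"
proof -
  have "cdf law_Y 0 = cond_prob M (\<lambda>\<omega>. X 2 \<omega> \<in> {..0}) (\<lambda>\<omega>. X 2 \<omega> > 0)"
    using Y_law[of 2 "{..0}"] prob_Y_le[of 2 0] by simp
  also have "\<dots> = 0"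
  proof -
    have "{\<omega>\<in>space M. X 2 \<omega> \<in> {..0} \<and> X 2 \<omega> > 0} = {}" by auto
    then show ?thesis by (simp only: cond_prob_def measure_empty div_0)
  qed
  finally show ?thesis .
qed

lemma finite_borel_measure_law_Y: "finite_borel_measure law_Y"
  by (rule real_distribution.finite_borel_measure_M[OF real_distribution_law_Y])

lemma cdf_law_Y_tendsto_0: "(cdf law_Y \<longlongrightarrow> 0) (at_right 0)"
  using finite_borel_measure.cdf_is_right_cont[OF finite_borel_measure_law_Y, of 0]
  by (simp add: continuous_within cdf_law_Y_0)

lemma AE_Y_pos: "2 \<le> j \<Longrightarrow> AE \<omega> in M. Y j \<omega> > 0"
  using prob_Y_le[of j 0]
  by (subst AE_iff_measurable[where N="{\<omega>\<in>space M. Y j \<omega> \<le> 0}"])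
     (auto simp: cdf_law_Y_0 emeasure_eq_measure not_less)

lemma prob_X1_le_Y_le:
  assumes "finite I" "I \<subseteq> {2..}"
  shows "prob {\<omega>\<in>space M. X 1 \<omega> \<le> x \<and> (\<forall>j\<in>I. Y j \<omega> \<le> t)}
       = prob {\<omega>\<in>space M. X 1 \<omega> \<le> x} * cdf law_Y t ^ card I"
proof -
  define J :: "(nat + nat) set" where "J = insert (Inl 1) (Inr ` I)"
  define A where "A i = (case i of Inl _ \<Rightarrow> {..x} | Inr _ \<Rightarrow> {..t})" for i :: "nat + nat"
  have "prob (\<Inter>i\<in>J. XY i -` A i \<inter> space M) = (\<Prod>i\<in>J. prob (XY i -` A i \<inter> space M))"
    using assms by (intro indep_varsD[OF indep_XY]) (auto simp: J_def XY_index_def A_def split: sum.split)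
  moreover have "(\<Inter>i\<in>J. XY i -` A i \<inter> space M) = {\<omega>\<in>space M. X 1 \<omega> \<le> x \<and> (\<forall>j\<in>I. Y j \<omega> \<le> t)}"
    by (auto simp: J_def A_def)
  moreover have "(\<Prod>i\<in>J. P i) = P (Inl 1) * (\<Prod>j\<in>I. P (Inr j))" for P :: "nat + nat \<Rightarrow> real"
    unfolding J_def using assms by (subst prod.insert) (auto simp: prod.reindex)
  moreover have "XY i -` A i \<inter> space M = (case i of Inl k \<Rightarrow> {\<omega>\<in>space M. X k \<omega> \<le> x}
      | Inr k \<Rightarrow> {\<omega>\<in>space M. Y k \<omega> \<le> t})" for i
    by (auto simp: A_def split: sum.split)
  moreover have "(\<Prod>j\<in>I. prob {\<omega>\<in>space M. Y j \<omega> \<le> t}) = cdf law_Y t ^ card I"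
    using assms by (simp add: prob_Y_le subset_eq)
  ultimately show ?thesis by simp
qed

lemma prob_X1_rest_Y_le:
  assumes I: "finite I" "I \<subseteq> {2..}" "i \<in> I" and B: "B \<in> sets borel"
  shows "prob {\<omega>\<in>space M. X 1 \<omega> \<in> B \<and> (\<Sum>j\<in>I-{i}. Y j \<omega>) \<le> a \<and> Y i \<omega> \<le> t}
       = prob {\<omega>\<in>space M. X 1 \<omega> \<in> B} * prob {\<omega>\<in>space M. (\<Sum>j\<in>I-{i}. Y j \<omega>) \<le> a} * cdf law_Y t"
proof -
  define K :: "nat \<Rightarrow> (nat + nat) set"
    where "K = (\<lambda>l. if l = 0 then {Inl 1} else if l = 1 then Inr ` (I - {i}) else {Inr i})"
  define f :: "nat \<Rightarrow> (nat + nat \<Rightarrow> real) \<Rightarrow> real"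
    where "f = (\<lambda>l. if l = 0 then (\<lambda>u. u (Inl 1)) else if l = 1 then (\<lambda>u. \<Sum>j\<in>I-{i}. u (Inr j)) else (\<lambda>u. u (Inr i)))"
  define C :: "nat \<Rightarrow> real set" where "C = (\<lambda>l. if l = 0 then B else if l = 1 then {..a} else {..t})"
  have f_eval: "f l (restrict (\<lambda>j. XY j \<omega>) (K l)) = (if l = 0 then X 1 \<omega> else if l = 1 then (\<Sum>j\<in>I-{i}. Y j \<omega>) else Y i \<omega>)"
    for l \<omega> by (simp add: f_def K_def)
  have f_meas: "f l \<in> borel_measurable (PiM (K l) (\<lambda>_. borel))" if "l \<in> {0, 1, 2}" for l
  proof -
    have "(\<lambda>u::nat + nat \<Rightarrow> real. \<Sum>j\<in>I-{i}. u (Inr j)) \<in> borel_measurable (PiM (Inr ` (I - {i})) (\<lambda>_. borel))"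
      by (intro borel_measurable_sum measurable_component_singleton) auto
    with that show ?thesis by (auto simp: f_def K_def)
  qed
  have "prob (\<Inter>l\<in>{0, 1, 2}. {\<omega>\<in>space M. f l (restrict (\<lambda>j. XY j \<omega>) (K l)) \<in> C l})
      = (\<Prod>l\<in>{0, 1, 2}. prob {\<omega>\<in>space M. f l (restrict (\<lambda>j. XY j \<omega>) (K l)) \<in> C l})"
    using I B by (intro prob_indep_vars_blocks[OF indep_XY] f_meas)
      (auto simp: K_def C_def XY_index_def disjoint_family_on_def)
  moreover have "2 \<le> i" using I by auto
  ultimately show ?thesis
    using prob_Y_le[of i t] by (simp add: f_eval C_def Int_def conj_ac)
qed

end

section \<open>Sums staying below the level L\<close>

locale zero_inflated_walk_level = zero_inflated_walk +
  fixes L :: real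
  assumes I2: "lower_end M (X 2) = 0"
    and L_pos: "L > 0"
    and L_prob: "measure M {\<omega> \<in> space M. X 1 \<omega> + Y 2 \<omega> \<le> L} > 0"
begin

definition below_prob :: "nat \<Rightarrow> real" where
  "below_prob k = prob {\<omega>\<in>space M. X 1 \<omega> + frakS Y k \<omega> \<le> L}"

definition excess_below_prob :: "real \<Rightarrow> nat \<Rightarrow> real" where
  "excess_below_prob d k =
     prob {\<omega>\<in>space M. X 1 \<omega> > lower_end M (X 1) + d \<and> X 1 \<omega> + frakS Y k \<omega> \<le> L}"

lemma below_prob_nonneg: "below_prob k \<ge> 0"
  by (simp add: below_prob_def)

lemma excess_below_prob_le_below_prob: "excess_below_prob d k \<le> below_prob k"
  unfolding excess_below_prob_def below_prob_def by (intro finite_measure_mono) auto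

lemma prob_X1_less_L: "prob {\<omega>\<in>space M. X 1 \<omega> < L} > 0"
proof -
  have "prob {\<omega>\<in>space M. X 1 \<omega> + Y 2 \<omega> \<le> L}
      \<le> prob ({\<omega>\<in>space M. X 1 \<omega> < L} \<union> {\<omega>\<in>space M. Y 2 \<omega> \<le> 0})"
    by (intro finite_measure_mono) auto
  also have "\<dots> \<le> prob {\<omega>\<in>space M. X 1 \<omega> < L} + prob {\<omega>\<in>space M. Y 2 \<omega> \<le> 0}"
    by (intro measure_Un_le) auto
  finally show ?thesis
    using L_prob prob_Y_le[of 2 0] by (simp add: cdf_law_Y_0)
qed

lemma exists_prob_X1_le_less_L: "\<exists>x<L. prob {\<omega>\<in>space M. X 1 \<omega> \<le> x} > 0"
proof -
  interpret X1: real_distribution "distr M borel (X 1)" by simp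
  have "(cdf (distr M borel (X 1)) \<longlongrightarrow> prob {\<omega>\<in>space M. X 1 \<omega> < L}) (at_left L)"
    using X1.cdf_at_left[of L] by (simp add: measure_distr vimage_def Int_def conj_commute)
  then have "\<forall>\<^sub>F x in at_left L. cdf (distr M borel (X 1)) x > 0"
    using prob_X1_less_L by (rule order_tendstoD)
  then obtain b where "b < L" "\<And>y. b < y \<Longrightarrow> y < L \<Longrightarrow> cdf (distr M borel (X 1)) y > 0"
    by (auto simp: eventually_at_left_field)
  then have "(b + L) / 2 < L" "cdf (distr M borel (X 1)) ((b + L) / 2) > 0"
    by auto
  then show ?thesis
    by (intro exI[of _ "(b + L) / 2"]) (auto simp: cdf_distr)
qed

lemma prob_X1_le_lower_end_add:
  assumes "d > 0"
  shows "prob {\<omega>\<in>space M. X 1 \<omega> \<le> lower_end M (X 1) + d} > 0"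
proof (rule prob_le_pos_above_lower_end)
  have "prob {\<omega>\<in>space M. X 1 \<omega> < L} \<le> prob {\<omega>\<in>space M. X 1 \<omega> \<le> L}"
    by (intro finite_measure_mono) auto
  with prob_X1_less_L L_pos show "\<exists>x\<ge>0. prob {\<omega>\<in>space M. X 1 \<omega> \<le> x} > 0"
    by (intro exI[of _ L]) auto
qed (use assms in auto)

lemma below_prob_pos:
  assumes cdf_pos: "\<And>t. t > 0 \<Longrightarrow> cdf law_Y t > 0"
  shows "below_prob k > 0"
proof -
  obtain x where x: "x < L" "prob {\<omega>\<in>space M. X 1 \<omega> \<le> x} > 0"
    using exists_prob_X1_le_less_L by blast
  define t where "t = (L - x) / (real k + 1)"
  have t: "t > 0" "real k * t \<le> L - x"
    using x by (auto simp: t_def field_simps)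
  have "0 < prob {\<omega>\<in>space M. X 1 \<omega> \<le> x} * cdf law_Y t ^ card {2..k+1}"
    using x cdf_pos[OF t(1)] by simp
  also have "\<dots> = prob {\<omega>\<in>space M. X 1 \<omega> \<le> x \<and> (\<forall>j\<in>{2..k+1}. Y j \<omega> \<le> t)}"
    by (rule prob_X1_le_Y_le[symmetric]) auto
  also have "\<dots> \<le> below_prob k"
    unfolding below_prob_def
  proof (intro finite_measure_mono subsetI)
    fix \<omega> assume \<omega>: "\<omega> \<in> {\<omega>\<in>space M. X 1 \<omega> \<le> x \<and> (\<forall>j\<in>{2..k+1}. Y j \<omega> \<le> t)}"
    then have "frakS Y k \<omega> \<le> real k * t"
      using sum_bounded_above[of "{2..k+1}" "\<lambda>j. Y j \<omega>" t] by (auto simp: frakS_def)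
    with \<omega> t show "\<omega> \<in> {\<omega>\<in>space M. X 1 \<omega> + frakS Y k \<omega> \<le> L}" by auto
  qed simp
  finally show ?thesis .
qed

lemma cdf_law_Y_pos_if_pos_prob_eq_1:
  assumes p: "pos_prob = 1" and t: "t > 0"
  shows "cdf law_Y t > 0"
proof -
  interpret X2: real_distribution "distr M borel (X 2)" by simp
  have "\<forall>\<^sub>F x in at_top. cdf (distr M borel (X 2)) x > 0"
    using X2.cdf_lim_at_top_prob by (rule order_tendstoD) simp
  then obtain N where "\<And>x. x \<ge> N \<Longrightarrow> cdf (distr M borel (X 2)) x > 0"
    by (auto simp: eventually_at_top_linorder)
  then have "max N 0 \<ge> 0" "cdf (distr M borel (X 2)) (max N 0) > 0"
    by auto
  then have "prob {\<omega>\<in>space M. X 2 \<omega> \<le> t} > 0"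
    using I2 t by (intro prob_le_pos_above_lower_end) (auto simp: cdf_distr intro!: exI[of _ "max N 0"])
  moreover have "prob {\<omega>\<in>space M. X 2 \<omega> \<le> t}
      \<le> prob {\<omega>\<in>space M. X 2 \<omega> \<le> t \<and> X 2 \<omega> > 0} + prob {\<omega>\<in>space M. X 2 \<omega> \<le> 0}"
    by (rule order_trans[OF finite_measure_mono measure_Un_le]) auto
  moreover have "prob {\<omega>\<in>space M. X 2 \<omega> \<le> 0} = 0"
    using law_X_nonpos p by (simp add: law_X_def emeasure_distr emeasure_eq_measure vimage_def Int_def conj_commute)
  moreover have "cdf law_Y t = prob {\<omega>\<in>space M. X 2 \<omega> \<le> t \<and> X 2 \<omega> > 0}"
    using Y_law[of 2 "{..t}"] prob_Y_le[of 2 t] p by (simp add: cond_prob_def pos_prob_def)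
  ultimately show ?thesis by simp
qed

lemma Kstar_eq: "Kstar M X Y L = Sup (enat ` {k. 1 \<le> k \<and> below_prob k > 0})"
  by (simp add: Kstar_def below_prob_def)

lemma Kstar_infinite_unbounded: "Kstar M X Y L = \<infinity> \<Longrightarrow> \<exists>k\<ge>m. below_prob k > 0"
  by (auto simp: Kstar_eq Sup_enat_image_eq_infinity_iff infinite_nat_iff_unbounded_le)

lemma Kstar_infinite_if_below_prob_pos:
  assumes "\<And>k. below_prob k > 0"
  shows "Kstar M X Y L = \<infinity>"
proof -
  have "\<exists>k\<ge>m. k \<in> {k. 1 \<le> k \<and> below_prob k > 0}" for m
    using assms by (intro exI[of _ "Suc m"]) auto
  then show ?thesis
    by (simp add: Kstar_eq Sup_enat_image_eq_infinity_iff infinite_nat_iff_unbounded_le)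
qed

lemma Kstar_finite:
  assumes K: "Kstar M X Y L = enat K"
  shows "below_prob K > 0" and "\<And>k. K < k \<Longrightarrow> below_prob k = 0"
proof -
  let ?S = "{k. 1 \<le> k \<and> below_prob k > 0}"
  have fin: "finite ?S"
    using K Sup_enat_image_eq_infinity_iff[of ?S] by (auto simp: Kstar_eq)
  have "1 \<in> ?S"
    using L_prob by (simp add: below_prob_def frakS_def numeral_2_eq_2)
  then have ne: "?S \<noteq> {}" by blast
  from K have "enat K = enat (Max ?S)"
    by (simp only: Kstar_eq Sup_enat_image_finite[OF fin ne])
  then have K_Max: "K = Max ?S" by simp
  show "below_prob K > 0"
    using Max_in[OF fin] \<open>1 \<in> ?S\<close> K_Max by auto
  fix k assume "K < k"
  then have "k \<notin> ?S" using Max_ge[OF fin, of k] K_Max by auto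
  moreover have "1 \<le> k" using \<open>K < k\<close> by simp
  ultimately show "below_prob k = 0"
    using below_prob_nonneg[of k] by auto
qed

lemma cdf_law_Y_pos_if_Kstar_infinite:
  assumes inf: "Kstar M X Y L = \<infinity>" and t: "t > 0"
  shows "cdf law_Y t > 0"
proof (rule ccontr)
  assume "\<not> cdf law_Y t > 0"
  moreover have "cdf law_Y t \<ge> 0"
    by (simp add: prob_Y_le[of 2 t, symmetric])
  ultimately have cdf_0: "cdf law_Y t = 0" by linarith
  obtain k where k: "k \<ge> nat \<lceil>L / t\<rceil> + 1" "below_prob k > 0"
    using Kstar_infinite_unbounded[OF inf] by blast
  have "L / t < real k" using k by linarith
  then have kt: "L < real k * t" using t by (simp add: field_simps)
  have "{\<omega>\<in>space M. X 1 \<omega> + frakS Y k \<omega> \<le> L} \<subseteq> (\<Union>j\<in>{2..k+1}. {\<omega>\<in>space M. Y j \<omega> \<le> t})"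
  proof (rule subsetI, rule ccontr)
    fix \<omega> assume \<omega>: "\<omega> \<in> {\<omega>\<in>space M. X 1 \<omega> + frakS Y k \<omega> \<le> L}"
      and "\<omega> \<notin> (\<Union>j\<in>{2..k+1}. {\<omega>\<in>space M. Y j \<omega> \<le> t})"
    then have "t < Y j \<omega>" if "j \<in> {2..k+1}" for j
      using that by (auto simp: not_le)
    then have "(\<Sum>j\<in>{2..k+1}. t) \<le> frakS Y k \<omega>"
      unfolding frakS_def by (intro sum_mono less_imp_le)
    with \<omega> kt nonneg[of 1 \<omega>] show False by simp
  qed
  then have "below_prob k \<le> measure M (\<Union>j\<in>{2..k+1}. {\<omega>\<in>space M. Y j \<omega> \<le> t})"
    unfolding below_prob_def by (intro finite_measure_mono) auto
  also have "\<dots> \<le> (\<Sum>j\<in>{2..k+1}. prob {\<omega>\<in>space M. Y j \<omega> \<le> t})"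
    by (intro measure_UNION_le) auto
  also have "\<dots> = 0"
    using cdf_0 by (simp add: prob_Y_le)
  finally show False using k by simp
qed

lemma prob_product_le_below_prob:
  assumes i: "i \<in> {2..k+1}" and "c + u + v \<le> L"
  shows "prob {\<omega>\<in>space M. X 1 \<omega> \<le> c} * prob {\<omega>\<in>space M. (\<Sum>j\<in>{2..k+1}-{i}. Y j \<omega>) \<le> u} * cdf law_Y v
       \<le> below_prob k"
proof -
  have "prob {\<omega>\<in>space M. X 1 \<omega> \<le> c} * prob {\<omega>\<in>space M. (\<Sum>j\<in>{2..k+1}-{i}. Y j \<omega>) \<le> u} * cdf law_Y v
      = prob {\<omega>\<in>space M. X 1 \<omega> \<in> {..c} \<and> (\<Sum>j\<in>{2..k+1}-{i}. Y j \<omega>) \<le> u \<and> Y i \<omega> \<le> v}"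
    using prob_X1_rest_Y_le[of "{2..k+1}" i "{..c}" u v] i by simp
  also have "\<dots> \<le> below_prob k"
    unfolding below_prob_def
  proof (intro finite_measure_mono subsetI)
    fix \<omega> assume "\<omega> \<in> {\<omega>\<in>space M. X 1 \<omega> \<in> {..c} \<and> (\<Sum>j\<in>{2..k+1}-{i}. Y j \<omega>) \<le> u \<and> Y i \<omega> \<le> v}"
    moreover have "frakS Y k \<omega> = (\<Sum>j\<in>{2..k+1}-{i}. Y j \<omega>) + Y i \<omega>"
      using i by (simp add: frakS_def sum_diff1)
    ultimately show "\<omega> \<in> {\<omega>\<in>space M. X 1 \<omega> + frakS Y k \<omega> \<le> L}"
      using assms(2) by auto
  qed simp
  finally show ?thesis .
qed

lemma excess_below_prob_le_sum:
  fixes d :: real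
  defines "a \<equiv> L - lower_end M (X 1) - d"
  assumes k: "k \<ge> 1" and s: "s > 0" "2 * \<bar>a\<bar> + 1 \<le> real k * s"
  shows "excess_below_prob d k
       \<le> 2 / real k * (\<Sum>i\<in>{2..k+1}. prob {\<omega>\<in>space M. (\<Sum>j\<in>{2..k+1}-{i}. Y j \<omega>) \<le> a \<and> Y i \<omega> \<le> s})"
proof -
  define I where "I = {2..k+1}"
  define S where "S i = {\<omega>\<in>space M. (\<Sum>j\<in>I-{i}. Y j \<omega>) \<le> a \<and> Y i \<omega> \<le> s}" for i
  define E where "E = {\<omega>\<in>space M. X 1 \<omega> > lower_end M (X 1) + d \<and> X 1 \<omega> + frakS Y k \<omega> \<le> L}"
  have I: "finite I" "card I = k" by (auto simp: I_def)
  have S_sets: "S i \<in> sets M" if "i \<in> I" for i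
  proof -
    have "(\<lambda>\<omega>. \<Sum>j\<in>I-{i}. Y j \<omega>) \<in> borel_measurable M"
      by (intro borel_measurable_sum) (auto simp: I_def)
    with that show ?thesis unfolding S_def by (simp add: I_def)
  qed
  have "AE \<omega> in M. \<forall>j\<in>I. Y j \<omega> > 0"
    using I(1) by (rule AE_finite_allI) (auto simp: I_def intro: AE_Y_pos)
  then have "AE \<omega> in M. indicator E \<omega> \<le> 2 / real k * (\<Sum>i\<in>I. indicator (S i) \<omega> :: real)"
  proof eventually_elim
    case (elim \<omega>)
    show ?case
    proof (cases "\<omega> \<in> E")
      case True
      then have "(\<Sum>i\<in>I. Y i \<omega>) < a" "\<omega> \<in> space M"
        by (auto simp: E_def a_def frakS_def I_def)
      from half_of_summands_small[OF I _ this(1) s] elim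
      have "real k \<le> 2 * real (card {i\<in>I. (\<Sum>j\<in>I-{i}. Y j \<omega>) \<le> a \<and> Y i \<omega> \<le> s})"
        by blast
      also have "real (card {i\<in>I. (\<Sum>j\<in>I-{i}. Y j \<omega>) \<le> a \<and> Y i \<omega> \<le> s}) = (\<Sum>i\<in>I. indicator (S i) \<omega>)"
        using I(1) \<open>\<omega> \<in> space M\<close> by (simp add: indicator_def S_def Int_def conj_commute)
      finally show ?thesis using True k by (simp add: field_simps)
    qed (simp add: sum_nonneg)
  qed
  moreover have "E \<in> sets M" unfolding E_def by measurable
  ultimately have "measure M E \<le> 2 / real k * (\<Sum>i\<in>I. measure M (S i))"
    using I(1) S_sets by (intro measure_le_sum_measure_AE)
  then show ?thesis by (simp add: excess_below_prob_def E_def S_def I_def)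
qed

lemma prob_rest_Y_le_le:
  assumes i: "i \<in> {2..k+1}" and "c + u + v \<le> L"
    and pos: "prob {\<omega>\<in>space M. X 1 \<omega> \<le> c} > 0" "cdf law_Y v > 0"
  shows "prob {\<omega>\<in>space M. (\<Sum>j\<in>{2..k+1}-{i}. Y j \<omega>) \<le> u \<and> Y i \<omega> \<le> s}
       \<le> cdf law_Y s * (below_prob k / (prob {\<omega>\<in>space M. X 1 \<omega> \<le> c} * cdf law_Y v))"
proof -
  let ?P = "prob {\<omega>\<in>space M. (\<Sum>j\<in>{2..k+1}-{i}. Y j \<omega>) \<le> u}"
  have "prob {\<omega>\<in>space M. X 1 \<omega> \<le> c} * ?P * cdf law_Y v \<le> below_prob k"
    using assms(1,2) by (rule prob_product_le_below_prob)
  then have "?P \<le> below_prob k / (prob {\<omega>\<in>space M. X 1 \<omega> \<le> c} * cdf law_Y v)"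
    using pos by (simp add: pos_le_divide_eq mult_ac)
  moreover have "cdf law_Y s \<ge> 0"
    by (simp add: prob_Y_le[of 2 s, symmetric])
  ultimately have "cdf law_Y s * ?P \<le> cdf law_Y s * (below_prob k / (prob {\<omega>\<in>space M. X 1 \<omega> \<le> c} * cdf law_Y v))"
    by (rule mult_left_mono)
  moreover have "prob {\<omega>\<in>space M. (\<Sum>j\<in>{2..k+1}-{i}. Y j \<omega>) \<le> u \<and> Y i \<omega> \<le> s} = cdf law_Y s * ?P"
    using prob_X1_rest_Y_le[of "{2..k+1}" i UNIV u s] i by (simp add: prob_space mult.commute)
  ultimately show ?thesis by simp
qed

lemma excess_below_prob_le:
  fixes d :: real
  defines "A \<equiv> 2 * \<bar>L - lower_end M (X 1) - d\<bar> + 1"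
    and "\<pi> \<equiv> prob {\<omega>\<in>space M. X 1 \<omega> \<le> lower_end M (X 1) + d / 2}"
  assumes d: "d > 0" and k: "k \<ge> 1" and F: "cdf law_Y (d / 2) > 0"
  shows "excess_below_prob d k \<le> 2 * cdf law_Y (A / real k) / (\<pi> * cdf law_Y (d / 2)) * below_prob k"
proof -
  define a where "a = L - lower_end M (X 1) - d"
  define s where "s = A / real k"
  have "A > 0"
    unfolding A_def by (intro add_nonneg_pos) simp_all
  then have s: "s > 0" using k by (simp add: s_def)
  have "real k * s = 2 * \<bar>a\<bar> + 1"
    using k by (simp add: s_def A_def a_def)
  then have "excess_below_prob d k
      \<le> 2 / real k * (\<Sum>i\<in>{2..k+1}. prob {\<omega>\<in>space M. (\<Sum>j\<in>{2..k+1}-{i}. Y j \<omega>) \<le> a \<and> Y i \<omega> \<le> s})"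
    using excess_below_prob_le_sum[OF k s] by (simp add: a_def)
  also have "\<dots> \<le> 2 / real k * (\<Sum>i\<in>{2..k+1}. cdf law_Y s * (below_prob k / (\<pi> * cdf law_Y (d / 2))))"
    unfolding \<pi>_def a_def using prob_X1_le_lower_end_add[of "d / 2"] d F
    by (intro mult_left_mono sum_mono prob_rest_Y_le_le) simp_all
  also have "\<dots> = 2 * cdf law_Y s / (\<pi> * cdf law_Y (d / 2)) * below_prob k"
    using k by simp
  finally show ?thesis by (simp only: s_def)
qed

lemma excess_below_prob_negligible:
  assumes inf: "Kstar M X Y L = \<infinity>" and d: "d > 0" and e: "e > 0"
  shows "\<exists>k0. \<forall>k\<ge>k0. excess_below_prob d k \<le> e * below_prob k"
proof -
  define A where "A = 2 * \<bar>L - lower_end M (X 1) - d\<bar> + 1"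
  define C where "C = 2 / (prob {\<omega>\<in>space M. X 1 \<omega> \<le> lower_end M (X 1) + d / 2} * cdf law_Y (d / 2))"
  have F: "cdf law_Y (d / 2) > 0"
    using cdf_law_Y_pos_if_Kstar_infinite[OF inf] d by simp
  have C: "C > 0"
    using F prob_X1_le_lower_end_add[of "d / 2"] d by (simp add: C_def)
  have "\<forall>\<^sub>F t in at_right 0. cdf law_Y t < e / C"
    using cdf_law_Y_tendsto_0 by (rule order_tendstoD) (use e C in simp)
  then obtain b where b: "b > 0" "\<And>t. 0 < t \<Longrightarrow> t < b \<Longrightarrow> cdf law_Y t < e / C"
    by (auto simp: eventually_at_right_field)
  have A: "A > 0"
    unfolding A_def by (intro add_nonneg_pos) simp_all
  show ?thesis
  proof (intro exI[of _ "nat \<lceil>2 * A / b\<rceil> + 1"] allI impI)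
    fix k assume k: "nat \<lceil>2 * A / b\<rceil> + 1 \<le> k"
    then have "2 * A / b < real k" by linarith
    then have "A / real k < b" using A b k by (simp add: field_simps)
    moreover have "A / real k > 0" using A k by simp
    ultimately have "cdf law_Y (A / real k) < e / C" by (rule b(2)[rotated])
    then have "C * cdf law_Y (A / real k) * below_prob k \<le> e * below_prob k"
      using C below_prob_nonneg[of k] by (intro mult_right_mono) (simp_all add: field_simps)
    moreover have "excess_below_prob d k \<le> C * cdf law_Y (A / real k) * below_prob k"
      using excess_below_prob_le[OF d _ F, of k] k by (simp add: A_def C_def)
    ultimately show "excess_below_prob d k \<le> e * below_prob k" by linarith
  qed
qed

lemma cond_prob_partS_Suc:
  "cond_prob M (\<lambda>\<omega>. X 1 \<omega> > lower_end M (X 1) + d) (\<lambda>\<omega>. partS X (Suc m) \<omega> \<le> L)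
     = (\<Sum>k\<le>m. pmf (binomial_pmf m pos_prob) k * excess_below_prob d k)
       / (\<Sum>k\<le>m. pmf (binomial_pmf m pos_prob) k * below_prob k)"
  using prob_partS_binomial[of "{lower_end M (X 1) + d<..}" m L] prob_partS_binomial[of UNIV m L]
  by (simp add: cond_prob_def excess_below_prob_def below_prob_def)

lemma tendsto_cond_prob_Kstar_infinite:
  assumes inf: "Kstar M X Y L = \<infinity>" and d: "d > 0"
  shows "(\<lambda>n. cond_prob M (\<lambda>\<omega>. X 1 \<omega> > lower_end M (X 1) + d) (\<lambda>\<omega>. partS X n \<omega> \<le> L)) \<longlonglongrightarrow> 0"
proof (rule filterlim_sequentially_Suc[THEN iffD1], unfold cond_prob_partS_Suc, rule weighted_ratio_tendsto_0)
  show "0 \<le> excess_below_prob d k" "excess_below_prob d k \<le> 1" for k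
    by (simp_all add: excess_below_prob_def)
  show "0 < below_prob k" for k
    using below_prob_pos cdf_law_Y_pos_if_Kstar_infinite[OF inf] by blast
  show "\<forall>\<^sub>F m in sequentially. pmf (binomial_pmf m pos_prob) k \<le> c * pmf (binomial_pmf m pos_prob) K"
    if "k < K" "c > 0" for k K c
    using pos_prob_pos pos_prob_le_1 that by (rule pmf_binomial_eventually_le)
  show "\<exists>k0. \<forall>k\<ge>k0. excess_below_prob d k \<le> e * below_prob k" if "e > 0" for e
    using excess_below_prob_negligible[OF inf d that] .
qed simp

lemma tendsto_cond_prob_Kstar_finite:
  assumes K: "Kstar M X Y L = enat K"
  shows "(\<lambda>n. cond_prob M (\<lambda>\<omega>. X 1 \<omega> > lower_end M (X 1) + d) (\<lambda>\<omega>. partS X n \<omega> \<le> L)) \<longlonglongrightarrow>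
           cond_prob M (\<lambda>\<omega>. X 1 \<omega> > lower_end M (X 1) + d) (\<lambda>\<omega>. X 1 \<omega> + frakS Y K \<omega> \<le> L)"
proof -
  have p: "pos_prob < 1"
  proof (rule ccontr)
    assume "\<not> pos_prob < 1"
    then have "pos_prob = 1" using pos_prob_le_1 by simp
    then have "Kstar M X Y L = \<infinity>"
      using Kstar_infinite_if_below_prob_pos below_prob_pos cdf_law_Y_pos_if_pos_prob_eq_1 by blast
    with K show False by simp
  qed
  have below_0: "below_prob k = 0" if "K < k" for k
    using Kstar_finite(2)[OF K that] .
  have excess_0: "excess_below_prob d k = 0" if "K < k" for k
  proof -
    have "0 \<le> excess_below_prob d k" by (simp add: excess_below_prob_def)
    with excess_below_prob_le_below_prob[of d k] below_0[OF that] show ?thesis by linarith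
  qed
  have pmf_pos: "\<forall>\<^sub>F m in sequentially. pmf (binomial_pmf m pos_prob) K > 0"
    using eventually_ge_at_top[of K] by eventually_elim (use p pos_prob_pos in simp)
  have lim: "(\<lambda>m. (\<Sum>k\<le>m. pmf (binomial_pmf m pos_prob) k * excess_below_prob d k)
                     / (\<Sum>k\<le>m. pmf (binomial_pmf m pos_prob) k * below_prob k))
        \<longlonglongrightarrow> excess_below_prob d K / below_prob K"
    by (rule weighted_ratio_tendsto[where w="\<lambda>m k. pmf (binomial_pmf m pos_prob) k"
          and q="excess_below_prob d" and r=below_prob, OF pmf_pos pmf_binomial_ratio_tendsto_0[OF pos_prob_pos p]
          excess_0 below_0 Kstar_finite(1)[OF K]])
  have lim_eq: "excess_below_prob d K / below_prob K
      = cond_prob M (\<lambda>\<omega>. X 1 \<omega> > lower_end M (X 1) + d) (\<lambda>\<omega>. X 1 \<omega> + frakS Y K \<omega> \<le> L)"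
    by (simp only: cond_prob_def excess_below_prob_def below_prob_def)
  show ?thesis
    by (rule filterlim_sequentially_Suc[THEN iffD1]) (use lim in \<open>simp only: cond_prob_partS_Suc lim_eq\<close>)
qed

end

theorem theoremA2:
  fixes M :: "'a measure" and X Y :: "nat \<Rightarrow> 'a \<Rightarrow> real" and L :: real
  assumes "prob_space M"
    and indep: "prob_space.indep_vars M (\<lambda>_. borel)
          (\<lambda>i. case i of Inl k \<Rightarrow> X k | Inr k \<Rightarrow> Y k)
          (Inl ` {1..} \<union> Inr ` {2..})"
    and nonneg: "\<And>k \<omega>. k \<ge> 1 \<Longrightarrow> \<omega> \<in> space M \<Longrightarrow> X k \<omega> \<ge> 0"
    and X_id: "\<And>k. k \<ge> 2 \<Longrightarrow> distr M borel (X k) = distr M borel (X 2)"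
    and p_pos: "measure M {\<omega> \<in> space M. X 2 \<omega> > 0} > 0"
    and Y_id: "\<And>k. k \<ge> 2 \<Longrightarrow> distr M borel (Y k) = distr M borel (Y 2)"
    and Y_law: "\<And>k U. k \<ge> 2 \<Longrightarrow> U \<in> sets borel \<Longrightarrow>
          measure M {\<omega> \<in> space M. Y k \<omega> \<in> U} =
          cond_prob M (\<lambda>\<omega>. X k \<omega> \<in> U) (\<lambda>\<omega>. X k \<omega> > 0)"
    and I2: "lower_end M (X 2) = 0"
    and L_pos: "L > 0"
    and L_prob: "measure M {\<omega> \<in> space M. X 1 \<omega> + Y 2 \<omega> \<le> L} > 0"
  shows "(Kstar M X Y L = \<infinity> \<longrightarrow> (\<forall>\<delta>>0.
            (\<lambda>n. cond_prob M (\<lambda>\<omega>. X 1 \<omega> > lower_end M (X 1) + \<delta>)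
                              (\<lambda>\<omega>. partS X n \<omega> \<le> L)) \<longlonglongrightarrow> 0))
       \<and> (\<forall>K::nat. Kstar M X Y L = enat K \<longrightarrow> (\<forall>\<delta>>0.
            (\<lambda>n. cond_prob M (\<lambda>\<omega>. X 1 \<omega> > lower_end M (X 1) + \<delta>)
                              (\<lambda>\<omega>. partS X n \<omega> \<le> L)) \<longlonglongrightarrow>
            cond_prob M (\<lambda>\<omega>. X 1 \<omega> > lower_end M (X 1) + \<delta>)
                        (\<lambda>\<omega>. X 1 \<omega> + frakS Y K \<omega> \<le> L)))"
proof -
  interpret zero_inflated_walk_level M X Y L
    by (intro zero_inflated_walk_level.intro zero_inflated_walk.intro zero_inflated_walk_axioms.intro
        zero_inflated_walk_level_axioms.intro) (fact assms)+
  show ?thesis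
    using tendsto_cond_prob_Kstar_infinite tendsto_cond_prob_Kstar_finite by blast
qed

end
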